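(* Let $n\geq 3$, $d\geq 2$ and $\ell\in\textup{int}(C_n)$. Then $V_d(\ell)$ contains $k$-dimensional polygons for every $k\in\{2,\ldots,\min\{d,n-1\}\}$.
   Context: $C_n$ is the set of $\ell=(l_1,\ldots,l_n)\in\mathbb{R}^n$ with $l_i>0$ and $l_i\leq\sum_{j\neq i}l_j$ for all $i$; $\textup{int}(C_n)$ is its interior (all these inequalities strict). $V_d(\ell)=\{(\mathbf{v}_1,\ldots,\mathbf{v}_{n-1})\in(\mathbb{R}^d)^{n-1} : \|\mathbf{v}_i-\mathbf{v}_{i-1}\|=l_i,\ i=1,\ldots,n\}$ with $\mathbf{v}_0=\mathbf{v}_n=\mathbf{0}$. The dimension of $P=(\mathbf{v}_1,\ldots,\mathbf{v}_{n-1})$ is the dimension of the linear span of its vertices $\mathbf{v}_1,\ldots,\mathbf{v}_{n-1}$. *)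

theory Defs
  imports "HOL-Analysis.Analysis"
begin

definition C_space :: "nat \<Rightarrow> (nat \<Rightarrow> real) set" where
  "C_space n = {l. \<forall>i\<in>{1..n}. 0 < l i \<and> l i \<le> (\<Sum>j\<in>{1..n}-{i}. l j)}"

definition int_C_space :: "nat \<Rightarrow> (nat \<Rightarrow> real) set" where
  "int_C_space n = {l. \<forall>i\<in>{1..n}. 0 < l i \<and> l i < (\<Sum>j\<in>{1..n}-{i}. l j)}"

text \<open>A polygon (v_1,...,v_{n-1}) is represented as a function v :: nat => 'a that
  vanishes outside {1..<n}; hence v 0 = v n = 0 automatically.\<close>
definition polygon_space :: "nat \<Rightarrow> (nat \<Rightarrow> real) \<Rightarrow> (nat \<Rightarrow> 'a::euclidean_space) set" where
  "polygon_space n l = {v. (\<forall>i. i \<notin> {1..<n} \<longrightarrow> v i = 0) \<and>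
                          (\<forall>i\<in>{1..n}. norm (v i - v (i - 1)) = l i)}"

definition polygon_dim :: "nat \<Rightarrow> (nat \<Rightarrow> 'a::euclidean_space) \<Rightarrow> nat" where
  "polygon_dim n v = dim (span (v ` {1..<n}))"

end

(* Write the polygon through its edge vectors e_i = v_i - v_(i-1): these have lengths l_i and sum
   to zero, and their partial sums are the vertices, which span the same space.  Edge vectors of
   every dimension k are built by induction on n.  For n = 3 they form a planar triangle.  For
   n > 3 the two shortest edges a, b are merged into one edge of a length m for which the shorter
   length vector is still interior and (l_a, l_b, m) is a nondegenerate triangle.  A chain
   realising it in dimension k or k - 1 is unfolded again by replacing the merged edge by the two
   sides of that triangle, whose apex leaves the line of the merged edge in a unit direction u
   orthogonal to it: choosing u inside the span keeps the dimension, choosing u orthogonal to the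
   whole span raises it by one. *)

theory Submission
  imports Defs
begin

definition interior_lengths :: "'i set \<Rightarrow> ('i \<Rightarrow> real) \<Rightarrow> bool" where
  "interior_lengths I l \<longleftrightarrow> (\<forall>i\<in>I. 0 < l i \<and> l i < (\<Sum>j\<in>I - {i}. l j))"

definition closed_chain :: "'i set \<Rightarrow> ('i \<Rightarrow> real) \<Rightarrow> ('i \<Rightarrow> 'a::real_normed_vector) \<Rightarrow> bool" where
  "closed_chain I l e \<longleftrightarrow> (\<forall>i\<in>I. norm (e i) = l i) \<and> (\<Sum>i\<in>I. e i) = 0"

lemma span_triangle_sides:
  fixes f u :: "'a::real_vector"
  assumes "\<beta> \<noteq> 0"
  shows "span {\<alpha> *\<^sub>R f + \<beta> *\<^sub>R u, f - (\<alpha> *\<^sub>R f + \<beta> *\<^sub>R u)} = span {f, u}"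
    (is "span {?g, f - ?g} = _")
proof -
  have g_span: "?g \<in> span {f, u}"
    by (intro span_add span_scale span_base) auto
  have f_span: "f \<in> span {?g, f - ?g}"
    using span_add[of ?g "{?g, f - ?g}" "f - ?g"] by (simp add: span_base)
  have "u = (1 / \<beta>) *\<^sub>R (?g - \<alpha> *\<^sub>R f)"
    using assms by simp
  also have "\<dots> \<in> span {?g, f - ?g}"
    by (intro span_scale span_diff f_span) (simp add: span_base)
  finally show ?thesis
    using g_span f_span unfolding span_eq by (auto intro: span_diff span_base)
qed

lemma triangle_on_base:
  fixes f u :: "'a::real_inner"
  assumes u: "norm u = 1" "inner u f = 0"
    and tri: "\<bar>x - y\<bar> < norm f" "norm f < x + y"
  obtains g where "norm g = x" "norm (f - g) = y" "span {g, f - g} = span {f, u}"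
proof -
  define c where "c = norm f"
  \<comment> \<open>g is the apex over the base f; a is the signed length of its projection onto f, and
    Heron's formula shows that the height b is positive.\<close>
  define a where "a = (c\<^sup>2 + x\<^sup>2 - y\<^sup>2) / (2 * c)"
  have c: "c > 0" and x: "x > 0" and y: "y > 0"
    using tri unfolding c_def by (auto simp: abs_less_iff)
  have heron: "4 * c\<^sup>2 * (x\<^sup>2 - a\<^sup>2) = (x + y - c) * (x - y + c) * (y - x + c) * (x + y + c)"
    using c unfolding a_def by (simp add: field_simps power2_eq_square)
  have "0 < x + y - c" "0 < x - y + c" "0 < y - x + c" "0 < x + y + c"
    using tri x y unfolding c_def by (auto simp: abs_less_iff)
  then have "0 < 4 * c\<^sup>2 * (x\<^sup>2 - a\<^sup>2)"
    unfolding heron by simp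
  then have a_x: "a\<^sup>2 < x\<^sup>2"
    by (simp add: zero_less_mult_iff)
  define b where "b = sqrt (x\<^sup>2 - a\<^sup>2)"
  have b: "b > 0" "b\<^sup>2 = x\<^sup>2 - a\<^sup>2"
    using a_x unfolding b_def by simp_all
  define g where "g = (a / c) *\<^sub>R f + b *\<^sub>R u"
  have ff: "inner f f = c\<^sup>2" and uu: "inner u u = 1" and fu: "inner f u = 0"
    using u unfolding c_def by (simp_all add: power2_norm_eq_inner[symmetric] inner_commute)
  have "(norm g)\<^sup>2 = a\<^sup>2 + b\<^sup>2"
    using c unfolding power2_norm_eq_inner g_def
    by (simp add: inner_add_left inner_add_right ff uu fu u(2) power2_eq_square)
  then have "norm g = x"
    using b x by (simp add: power2_eq_iff_nonneg)
  have f_g: "f - g = ((c - a) / c) *\<^sub>R f - b *\<^sub>R u"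
    using c unfolding g_def by (simp add: algebra_simps diff_divide_distrib)
  have "(norm (f - g))\<^sup>2 = (c - a)\<^sup>2 + b\<^sup>2"
    using c unfolding power2_norm_eq_inner f_g
    by (simp add: inner_diff_left inner_diff_right ff uu fu u(2) power2_eq_square)
  also have "\<dots> = y\<^sup>2"
    using b c unfolding a_def by (simp add: power2_eq_square field_simps)
  finally have "norm (f - g) = y"
    using y by (simp add: power2_eq_iff_nonneg)
  moreover have "span {g, f - g} = span {f, u}"
    using b unfolding g_def by (intro span_triangle_sides) simp
  ultimately show ?thesis
    using that \<open>norm g = x\<close> by blast
qed

lemma zero_sum_split_summand:
  fixes e :: "'i \<Rightarrow> 'a::real_inner"
  assumes I: "finite I" "a \<in> I" "b \<notin> I" and sum: "(\<Sum>i\<in>I. e i) = 0"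
    and u: "norm u = 1" "inner u (e a) = 0"
    and tri: "\<bar>x - y\<bar> < norm (e a)" "norm (e a) < x + y"
  obtains e' where "(\<Sum>i\<in>insert b I. e' i) = 0" "norm (e' a) = x" "norm (e' b) = y"
    "\<forall>i\<in>I - {a}. e' i = e i" "span (e' ` insert b I) = span (insert u (e ` I))"
proof -
  obtain g where g: "norm g = x" "norm (e a - g) = y" "span {g, e a - g} = span {e a, u}"
    using triangle_on_base[OF u tri] .
  define e' where "e' = e(a := g, b := e a - g)"
  have ab: "a \<noteq> b"
    using I by auto
  have rest: "\<forall>i\<in>I - {a}. e' i = e i"
    using I by (auto simp: e'_def)
  have "(\<Sum>i\<in>insert b I. e' i) = e' b + (e' a + (\<Sum>i\<in>I - {a}. e' i))"
    using I by (simp add: sum.remove)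
  also have "\<dots> = (e a - g) + (g + (\<Sum>i\<in>I - {a}. e i))"
    using ab rest by (simp add: e'_def)
  also have "\<dots> = (\<Sum>i\<in>I. e i)"
    using I by (simp add: sum.remove)
  finally have "(\<Sum>i\<in>insert b I. e' i) = 0"
    using sum by simp
  moreover have "norm (e' a) = x" "norm (e' b) = y"
    using g ab by (simp_all add: e'_def)
  moreover have "span (e' ` insert b I) = span ({g, e a - g} \<union> e ` (I - {a}))"
    using I ab rest by (auto simp: e'_def intro!: arg_cong[where f = span])
  moreover have "span ({g, e a - g} \<union> e ` (I - {a})) = span ({e a, u} \<union> e ` (I - {a}))"
    using g(3) by (simp only: span_Un)
  moreover have "{e a, u} \<union> e ` (I - {a}) = insert u (e ` I)"
    using I by auto
  ultimately show ?thesis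
    using that rest by simp
qed

lemma exists_unit_orthogonal_dim:
  fixes f :: "'a::euclidean_space"
  assumes f: "f \<in> span S" and k: "2 \<le> k" "k \<le> DIM('a)" "k = dim S \<or> k = Suc (dim S)"
  obtains u where "norm u = 1" "inner u f = 0" "dim (insert u S) = k"
proof -
  obtain x where x: "x \<noteq> 0" "orthogonal x f" "dim (insert x S) = k"
  proof (cases "k = dim S")
    case True
    have "span {f} \<subseteq> span S"
      using f by (simp add: span_minimal)
    moreover have "dim {f} < dim S"
      using True k by simp
    ultimately have "span {f} \<subset> span S"
      by (metis dim_span order_less_irrefl psubsetI)
    then obtain x where "x \<noteq> 0" "x \<in> span S" "\<And>y. y \<in> span {f} \<Longrightarrow> orthogonal x y"
      by (rule orthogonal_to_subspace_exists_gen) blast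
    then show ?thesis
      using that True by (simp add: dim_insert span_base)
  next
    case False
    then have "dim S < DIM('a)"
      using k by simp
    then obtain x where "x \<noteq> 0" "\<And>y. y \<in> span S \<Longrightarrow> orthogonal x y"
      by (rule orthogonal_to_subspace_exists) blast
    moreover have "x \<notin> span S"
      using calculation orthogonal_self by blast
    ultimately show ?thesis
      using that False f k by (simp add: dim_insert)
  qed
  define u where "u = x /\<^sub>R norm x"
  have "x = norm x *\<^sub>R u"
    using x(1) by (simp add: u_def)
  then have "u \<in> span S \<longleftrightarrow> x \<in> span S"
    unfolding u_def by (metis span_scale)
  then have "dim (insert u S) = k"
    using x(3) by (simp add: dim_insert)
  moreover have "norm u = 1" "inner u f = 0"
    using x(1,2) by (simp_all add: u_def orthogonal_def)
  ultimately show ?thesis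
    using that by blast
qed

lemma closed_chain_split_edge:
  fixes e :: "'i \<Rightarrow> 'a::euclidean_space"
  assumes I: "finite I" "a \<in> I" "b \<notin> I" and e: "closed_chain I (l(a := m)) e"
    and m: "\<bar>l a - l b\<bar> < m" "m < l a + l b"
    and k: "2 \<le> k" "k \<le> DIM('a)" "k = dim (e ` I) \<or> k = Suc (dim (e ` I))"
  obtains e' :: "'i \<Rightarrow> 'a" where "closed_chain (insert b I) l e'" "dim (e' ` insert b I) = k"
proof -
  have e_a: "norm (e a) = m" and sum: "(\<Sum>i\<in>I. e i) = 0"
    using e I unfolding closed_chain_def by auto
  have "e a \<in> span (e ` I)"
    using I by (simp add: span_base)
  then obtain u where u: "norm u = 1" "inner u (e a) = 0" "dim (insert u (e ` I)) = k"
    using exists_unit_orthogonal_dim k by blast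
  obtain e' where e': "(\<Sum>i\<in>insert b I. e' i) = 0" "norm (e' a) = l a" "norm (e' b) = l b"
      "\<forall>i\<in>I - {a}. e' i = e i" "span (e' ` insert b I) = span (insert u (e ` I))"
    using zero_sum_split_summand[OF I sum u(1,2)] m e_a by metis
  have "norm (e' i) = l i" if "i \<in> insert b I" for i
    using that e e' I unfolding closed_chain_def by (cases "i = a") auto
  then have "closed_chain (insert b I) l e'"
    using e'(1) unfolding closed_chain_def by blast
  moreover have "dim (e' ` insert b I) = k"
    using e'(5) u(3) by (metis dim_span)
  ultimately show ?thesis
    using that by blast
qed

lemma dense_between_finite_sets:
  fixes A B :: "'a::dense_linorder set"
  assumes "finite A" "A \<noteq> {}" "finite B" "B \<noteq> {}" "\<And>x y. x \<in> A \<Longrightarrow> y \<in> B \<Longrightarrow> x < y"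
  obtains m where "\<And>x. x \<in> A \<Longrightarrow> x < m" "\<And>y. y \<in> B \<Longrightarrow> m < y"
proof -
  obtain m where "Max A < m" "m < Min B"
    using assms dense[of "Max A" "Min B"] by auto
  then show ?thesis
    using that assms by (meson Max_ge Min_le le_less_trans less_le_trans)
qed

lemma obtain_two_smallest:
  fixes l :: "'i \<Rightarrow> 'b::linorder"
  assumes I: "finite I" "2 \<le> card I"
  obtains a b where "a \<in> I" "b \<in> I" "a \<noteq> b" "\<forall>i\<in>I - {a, b}. l a \<le> l i \<and> l b \<le> l i"
proof -
  have nonempty: "I - {c} \<noteq> {}" for c
    using I card_mono[of "{c}" I] by auto
  define a where "a = arg_min_on l I"
  define b where "b = arg_min_on l (I - {a})"
  have a: "a \<in> I" "\<forall>i\<in>I. l a \<le> l i"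
    using arg_min_if_finite[of I l] I nonempty unfolding a_def by (auto simp: not_less[symmetric])
  have b: "b \<in> I - {a}" "\<forall>i\<in>I - {a}. l b \<le> l i"
    using arg_min_if_finite[of "I - {a}" l] I nonempty unfolding b_def by (auto simp: not_less[symmetric])
  show ?thesis
    using that a b by blast
qed

lemma interior_lengths_merge_edges:
  fixes I :: "'i set" and a b :: 'i and l :: "'i \<Rightarrow> real"
  defines "T \<equiv> \<Sum>j\<in>I - {a, b}. l j"
  assumes I: "finite I" "a \<in> I" "a \<noteq> b" and pos: "\<forall>i\<in>I. 0 < l i"
    and m: "0 < m" "m < T" "\<forall>i\<in>I - {a, b}. 2 * l i - T < m"
  shows "interior_lengths (I - {b}) (l(a := m))"
  unfolding interior_lengths_def
proof
  fix i assume i: "i \<in> I - {b}"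
  show "0 < (l(a := m)) i \<and> (l(a := m)) i < (\<Sum>j\<in>I - {b} - {i}. (l(a := m)) j)"
  proof (cases "i = a")
    case True
    have "(\<Sum>j\<in>I - {b} - {i}. (l(a := m)) j) = T"
      unfolding T_def True by (intro sum.cong) auto
    then show ?thesis
      using True m by simp
  next
    case False
    then have J: "i \<in> I - {a, b}"
      using i by blast
    have "I - {b} - {i} = insert a (I - {a, b} - {i})"
      using i I False by auto
    then have "(\<Sum>j\<in>I - {b} - {i}. (l(a := m)) j) = m + (\<Sum>j\<in>I - {a, b} - {i}. l j)"
      using I by (simp add: sum.cong[OF refl, of _ "l(a := m)" l])
    moreover have "T = l i + (\<Sum>j\<in>I - {a, b} - {i}. l j)"
      using I J unfolding T_def by (simp add: sum.remove)
    moreover have "2 * l i - T < m" "0 < l i"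
      using J m(3) pos by auto
    ultimately show ?thesis
      using False by simp
  qed
qed

lemma interior_lengths_merge:
  fixes l :: "'i \<Rightarrow> real"
  assumes I: "finite I" "4 \<le> card I" and l: "interior_lengths I l"
    and ab: "a \<in> I" "b \<in> I" "a \<noteq> b" and smallest: "\<forall>i\<in>I - {a, b}. l a \<le> l i \<and> l b \<le> l i"
  obtains m where "\<bar>l a - l b\<bar> < m" "m < l a + l b" "interior_lengths (I - {b}) (l(a := m))"
proof -
  define J where "J = I - {a, b}"
  define T where "T = (\<Sum>j\<in>J. l j)"
  define A where "A = insert \<bar>l a - l b\<bar> ((\<lambda>i. 2 * l i - T) ` J)"
  have J: "finite J" "2 \<le> card J"
    using I ab unfolding J_def by (simp_all add: card_Diff_subset)
  have pos: "\<forall>i\<in>I. 0 < l i"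
    using l unfolding interior_lengths_def by blast
  have below_T: "l i < T" if "i \<in> J" for i
  proof -
    have "0 < (\<Sum>j\<in>J - {i}. l j)"
      using J pos card_mono[of "{i}" J] by (intro sum_pos) (auto simp: J_def)
    then show ?thesis
      using J that unfolding T_def by (simp add: sum.remove)
  qed
  have "l i < l a + l b + T - l i" if "i \<in> J" for i
  proof -
    have "I - {i} = insert a (insert b (J - {i}))"
      using that ab unfolding J_def by auto
    then have "(\<Sum>j\<in>I - {i}. l j) = l a + l b + T - l i"
      using J ab that unfolding J_def T_def by (simp add: sum_diff1)
    then show ?thesis
      using l that unfolding interior_lengths_def J_def by force
  qed
  moreover obtain c where c: "c \<in> J"
    using J by fastforce
  \<comment> \<open>Here the choice of a and b as the two shortest edges is needed.\<close>
  have "l a \<le> l c" "l b \<le> l c" "0 < l a" "0 < l b"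
    using smallest c pos ab unfolding J_def by auto
  then have "\<bar>l a - l b\<bar> < l c" "\<bar>l a - l b\<bar> < l a + l b"
    by linarith+
  ultimately have sep: "x < y" if "x \<in> A" "y \<in> {l a + l b, T}" for x y
    using that c below_T unfolding A_def by fastforce
  have "finite A" "A \<noteq> {}"
    using J unfolding A_def by simp_all
  then obtain m where lower: "\<And>x. x \<in> A \<Longrightarrow> x < m" and upper: "\<And>y. y \<in> {l a + l b, T} \<Longrightarrow> m < y"
    by (rule dense_between_finite_sets[of A "{l a + l b, T}"]) (use sep in auto)
  have "m < l a + l b" "m < T"
    using upper by simp_all
  have "0 < m"
    using lower[of "\<bar>l a - l b\<bar>"] abs_ge_zero[of "l a - l b"] unfolding A_def by simp
  moreover have "\<forall>i\<in>J. 2 * l i - T < m"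
    using lower unfolding A_def by blast
  ultimately have "interior_lengths (I - {b}) (l(a := m))"
    using interior_lengths_merge_edges[of I a b l m] I ab pos \<open>m < T\<close> unfolding J_def T_def by blast
  then show ?thesis
    using that lower[of "\<bar>l a - l b\<bar>"] \<open>m < l a + l b\<close> unfolding A_def by blast
qed

lemma closed_chain_triangle:
  fixes l :: "'i \<Rightarrow> real"
  assumes abc: "a \<noteq> b" "b \<noteq> c" "a \<noteq> c" and l: "interior_lengths {a, b, c} l"
    and DIM: "2 \<le> DIM('a)"
  obtains e :: "'i \<Rightarrow> 'a::euclidean_space" where "closed_chain {a, b, c} l e" "dim (e ` {a, b, c}) = 2"
proof -
  have tri: "0 < l c" "\<bar>l a - l b\<bar> < l c" "l c < l a + l b"
    using l abc unfolding interior_lengths_def by (auto simp: insert_Diff_if abs_less_iff)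
  obtain w :: 'a where "w \<in> Basis"
    using nonempty_Basis by blast
  define f where "f = l c *\<^sub>R w"
  have f: "norm f = l c" "f \<noteq> 0"
    using \<open>w \<in> Basis\<close> tri unfolding f_def by auto
  \<comment> \<open>The degenerate closed chain f, -f on {a, c} is unfolded at its edge a.\<close>
  define e where "e = (\<lambda>i. if i = c then - f else f)"
  have "f \<in> span {- f}"
    using span_neg[OF span_base[of "- f" "{- f}"]] by simp
  have "closed_chain {a, c} (l(a := l c)) e"
    using f abc unfolding closed_chain_def e_def by auto
  moreover have "dim (e ` {a, c}) = 1"
    using f abc \<open>f \<in> span {- f}\<close> unfolding e_def by (simp add: dim_insert)
  moreover have "insert b {a, c} = {a, b, c}"
    by auto
  ultimately show ?thesis
    using closed_chain_split_edge[of "{a, c}" a b l "l c" e 2] abc tri DIM that by auto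
qed

lemma closed_chain_of_dim:
  fixes l :: "'i \<Rightarrow> real"
  assumes "finite I" "3 \<le> card I" "interior_lengths I l"
    and "2 \<le> k" "k < card I" "k \<le> DIM('a::euclidean_space)"
  shows "\<exists>e :: 'i \<Rightarrow> 'a. closed_chain I l e \<and> dim (e ` I) = k"
  using assms
proof (induction "card I" arbitrary: I l k rule: less_induct)
  case less
  show ?case
  proof (cases "card I = 3")
    case True
    then obtain a b c where "I = {a, b, c}" "a \<noteq> b" "b \<noteq> c" "a \<noteq> c"
      by (metis card_3_iff)
    moreover have "k = 2"
      using less.prems True by simp
    ultimately show ?thesis
      using closed_chain_triangle[of a b c l] less.prems by metis
  next
    case False
    then have I: "finite I" "4 \<le> card I"
      using less.prems by auto
    have "2 \<le> card I"
      using I by simp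
    then obtain a b where ab: "a \<in> I" "b \<in> I" "a \<noteq> b" "\<forall>i\<in>I - {a, b}. l a \<le> l i \<and> l b \<le> l i"
      using obtain_two_smallest[OF I(1), where l = l] by blast
    obtain m where m: "\<bar>l a - l b\<bar> < m" "m < l a + l b" "interior_lengths (I - {b}) (l(a := m))"
      using interior_lengths_merge[OF I less.prems(3) ab] .
    have card: "card (I - {b}) = card I - 1"
      using I ab by simp
    \<comment> \<open>A closed chain on I - {b} has dimension at most card I - 2.\<close>
    define k' where "k' = (if k < card I - 1 then k else k - 1)"
    have k': "2 \<le> k'" "k' < card (I - {b})" "k' \<le> DIM('a)" "k = k' \<or> k = Suc k'"
      using less.prems I card unfolding k'_def by auto
    obtain e :: "'i \<Rightarrow> 'a" where e: "closed_chain (I - {b}) (l(a := m)) e" "dim (e ` (I - {b})) = k'"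
      using less.hyps[of "I - {b}" "l(a := m)" k'] less.prems(1) I card m(3) k' by auto
    obtain e' :: "'i \<Rightarrow> 'a" where "closed_chain (insert b (I - {b})) l e'" "dim (e' ` insert b (I - {b})) = k"
      using closed_chain_split_edge[of "I - {b}" a b l m e k] less.prems(1,4,6) ab m(1,2) e k'(4) by auto
    then show ?thesis
      using ab by (metis insert_Diff)
  qed
qed

lemma polygon_of_closed_chain:
  fixes e :: "nat \<Rightarrow> 'a::euclidean_space"
  assumes e: "closed_chain {1..n} l e"
  obtains v :: "nat \<Rightarrow> 'a" where "v \<in> polygon_space n l" "polygon_dim n v = dim (e ` {1..n})"
proof -
  define S where "S i = (\<Sum>j = 1..i. e j)" for i
  define v where "v i = (if i \<in> {1..<n} then S i else 0)" for i
  have "S n = 0"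
    using e by (simp add: closed_chain_def S_def)
  then have v_S: "v i = S i" if "i \<le> n" for i
    using that by (cases "i = 0") (auto simp: v_def S_def)
  have edge: "v i - v (i - 1) = e i" if i: "i \<in> {1..n}" for i
  proof -
    obtain j where "i = Suc j"
      using i by (cases i) auto
    then show ?thesis
      using i v_S[of i] v_S[of j] by (simp add: S_def)
  qed
  have "v \<in> polygon_space n l"
    using e edge unfolding polygon_space_def closed_chain_def by (auto simp: v_def)
  moreover have "span (v ` {1..<n}) = span (e ` {1..n})"
    unfolding span_eq
  proof (intro conjI subsetI)
    fix z assume "z \<in> v ` {1..<n}"
    then obtain i where "i \<in> {1..<n}" "z = S i"
      by (auto simp: v_def)
    then show "z \<in> span (e ` {1..n})"
      unfolding S_def by (auto intro!: span_sum intro: span_base)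
  next
    fix z assume "z \<in> e ` {1..n}"
    then obtain i where "i \<in> {1..n}" "z = v i - v (i - 1)"
      using edge by auto
    moreover have "v j \<in> span (v ` {1..<n})" for j
      by (cases "j \<in> {1..<n}") (auto simp: v_def span_base span_zero)
    ultimately show "z \<in> span (v ` {1..<n})"
      by (simp add: span_diff)
  qed
  then have "polygon_dim n v = dim (e ` {1..n})"
    unfolding polygon_dim_def by (metis dim_span)
  ultimately show ?thesis
    using that by blast
qed

theorem proposition3p3:
  fixes n :: nat and l :: "nat \<Rightarrow> real"
  assumes "n \<ge> 3" and "DIM('a::euclidean_space) \<ge> 2" and "l \<in> int_C_space n"
  shows "\<forall>k\<in>{2..min DIM('a) (n - 1)}.
           \<exists>v::nat \<Rightarrow> 'a. v \<in> polygon_space n l \<and> polygon_dim n v = k"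
proof
  fix k assume k: "k \<in> {2..min DIM('a) (n - 1)}"
  have "interior_lengths {1..n} l"
    using assms(3) unfolding int_C_space_def interior_lengths_def by simp
  then have "\<exists>e :: nat \<Rightarrow> 'a. closed_chain {1..n} l e \<and> dim (e ` {1..n}) = k"
    using closed_chain_of_dim[where 'a = 'a, of "{1..n}" l k] assms(1) k by auto
  then show "\<exists>v::nat \<Rightarrow> 'a. v \<in> polygon_space n l \<and> polygon_dim n v = k"
    by (metis polygon_of_closed_chain)
qed

end
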